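(* Let $\theta:\mathbb{R}\to\mathbb{R}$ be continuously differentiable and strictly increasing, let $\tau,h_i,v^n>0$, set $\lambda=\tau v^n/h_i$, and write $\Theta_j^m=\theta(Q_j^m)$. Let $\bar w\in[0,1]$, $\Psi_{\mathrm{prev}}\in[0,2]$, $\tilde C>0$, and let $$\Psi(r)=\max\big\{0,\ \min\{(2\tilde C+\Psi_{\mathrm{prev}})\,r,\ 1-\bar w+\bar w r,\ 2\}\big\}.$$ Suppose real numbers $Q_i^n,Q_i^{n-1},Q_{i-1}^n,Q_{i-1}^{n+1}$ satisfy $$\Theta_i^n + \tfrac12\Psi(r_i^n)(\Theta_{i-1}^{n+1}-\Theta_i^n) + \lambda Q_i^n = \Theta_i^{n-1} + \tfrac12\Psi_{\mathrm{prev}}(\Theta_{i-1}^n-\Theta_i^{n-1}) + \lambda Q_{i-1}^n,\qquad r_i^n=\frac{\Theta_{i-1}^n-\Theta_i^{n-1}}{\Theta_{i-1}^{n+1}-\Theta_i^n},$$ (with the term $\Psi(r_i^n)(\Theta_{i-1}^{n+1}-\Theta_i^n)$ set to $0$ when $\Theta_{i-1}^{n+1}=\Theta_i^n$), and suppose $\tilde C\le C_i^n$, where $$C_i^n=\frac{Q_i^n-Q_{i-1}^n}{\Theta_i^n-\Theta_{i-1}^n}\,\lambda \ \text{ if } Q_i^n\ne Q_{i-1}^n,\qquad C_i^n=\frac{\lambda}{\theta'(Q_i^n)}\ \text{ if } Q_i^n=Q_{i-1}^n$$ (for instance $\tilde C=\lambda/M$ if $\theta'\le M$ on the relevant range). Then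 $$\min\{Q_i^{n-1},Q_{i-1}^n\}\le Q_i^n\le \max\{Q_i^{n-1},Q_{i-1}^n\}.$$
   Context: This is the high-resolution compact inverse scheme for the nonlinear advection equation with retardation $\partial_t\theta(q)+v(t)\partial_xq=0$ (e.g. $\theta(q)=\kappa q$ plus a nonlinear sorption term), in conservative form $h_i\Theta_i^{n+1/2}+\tau v^nQ_i^n=h_i\Theta_i^{n-1/2}+\tau v^nQ_{i-1}^n$ with $\Theta_i^{n+1/2}=\Theta_i^n+\frac12\Psi(r_i^n)(\Theta_{i-1}^{n+1}-\Theta_i^n)$; $C_i^n$ is the nonlinear local Courant number, $\Psi_{\mathrm{prev}}=\Psi(r_i^{n-1})$ the limiter value from the previous time level, $Q_i^n\approx q(x_i,t^n)$. *)

theory Defs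
  imports "HOL-Analysis.Analysis" "HOL-Library.Extended_Real"
begin

definition limiter :: "real \<Rightarrow> real \<Rightarrow> real \<Rightarrow> real \<Rightarrow> real" where
  "limiter Ct Psiprev w r = max 0 (min ((2 * Ct + Psiprev) * r) (min (1 - w + w * r) 2))"

text \<open>Nonlinear local Courant number C_i^n, given Q_i^n (q) and Q_(i-1)^n (qm).
  In the case q = qm the value lambda / theta'(q) is read as +infinity when theta'(q) = 0.\<close>
definition courant :: "(real \<Rightarrow> real) \<Rightarrow> real \<Rightarrow> real \<Rightarrow> real \<Rightarrow> ereal" where
  "courant \<theta> lam q qm =
     (if q \<noteq> qm then ereal ((q - qm) / (\<theta> q - \<theta> qm) * lam)
      else if deriv \<theta> q = 0 then \<infinity> else ereal (lam / deriv \<theta> q))"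

end

theory Submission
  imports Defs
begin

text \<open>Write \<open>a, b, x\<close> for the values of \<open>\<theta>\<close> at \<open>Qi_prev, Qim_n, Qi_n\<close>. The limiter vanishes
  for \<open>r \<le> 0\<close> and is at most \<open>(2 Ct + Psiprev) r\<close>, so the limited increment equals
  \<open>\<mu> (b - a)\<close> with \<open>0 \<le> \<mu> \<le> 2 Ct + Psiprev\<close>. The Courant number \<open>C\<close> turns the flux
  difference into \<open>C (x - b)\<close>, and the scheme becomes
  \<open>(1 + C) (x - a) = (C + (Psiprev - \<mu>) / 2) (b - a)\<close>. Since \<open>Ct \<le> C\<close> and \<open>Psiprev \<le> 2\<close>,
  the coefficient \<open>(C + (Psiprev - \<mu>) / 2) / (1 + C)\<close> lies in \<open>[0, 1]\<close>, so \<open>x\<close> lies between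
  \<open>a\<close> and \<open>b\<close>, and monotonicity of \<open>\<theta>\<close> transfers this to the \<open>Q\<close>-values. Smoothness of
  \<open>\<theta>\<close>, the value of \<open>lam\<close> and the parameter \<open>w\<close> play no role.\<close>

lemma limiter_eq_0_of_nonpos:
  assumes "r \<le> 0" "0 \<le> 2 * Ct + Psiprev"
  shows "limiter Ct Psiprev w r = 0"
proof -
  have "(2 * Ct + Psiprev) * r \<le> 0"
    using assms by (simp add: mult_nonneg_nonpos)
  then show ?thesis
    unfolding limiter_def by linarith
qed

lemma limiter_nonneg: "0 \<le> limiter Ct Psiprev w r"
  unfolding limiter_def by simp

lemma limiter_le_slope:
  assumes "0 \<le> r" "0 \<le> 2 * Ct + Psiprev"
  shows "limiter Ct Psiprev w r \<le> (2 * Ct + Psiprev) * r"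
  using assms unfolding limiter_def by simp

lemma limited_increment_eq_mult:
  assumes "0 \<le> 2 * Ct + Psiprev"
  obtains \<mu> where "0 \<le> \<mu>" "\<mu> \<le> 2 * Ct + Psiprev"
    and "(if d = 0 then 0 else limiter Ct Psiprev w (D / d) * d) = \<mu> * D"
proof (cases "d = 0 \<or> D / d \<le> 0")
  case True
  then have "(if d = 0 then 0 else limiter Ct Psiprev w (D / d) * d) = 0 * D"
    using limiter_eq_0_of_nonpos[OF _ assms] by auto
  with assms that show ?thesis by blast
next
  case False
  define r where "r = D / d"
  have "d \<noteq> 0" "0 < r" using False by (auto simp: r_def)
  then have "D = r * d" by (simp add: r_def)
  then have "limiter Ct Psiprev w r * d = (limiter Ct Psiprev w r / r) * D"
    using \<open>0 < r\<close> by simp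
  moreover have "0 \<le> limiter Ct Psiprev w r / r"
    using limiter_nonneg \<open>0 < r\<close> by simp
  moreover have "limiter Ct Psiprev w r / r \<le> 2 * Ct + Psiprev"
    using limiter_le_slope[OF _ assms] \<open>0 < r\<close> by (simp add: divide_le_eq)
  ultimately show ?thesis
    using that \<open>d \<noteq> 0\<close> by (simp add: r_def)
qed

lemma between_of_affine_coeff:
  fixes a b t :: real
  assumes "0 \<le> t" "t \<le> 1"
  shows "min a b \<le> a + t * (b - a) \<and> a + t * (b - a) \<le> max a b"
proof (cases "a \<le> b")
  case True
  have "t * (b - a) \<le> b - a"
    using assms True by (simp add: mult_left_le_one_le)
  then show ?thesis
    using assms True by simp
next
  case False
  have "b - a \<le> t * (b - a)"
    using mult_right_mono_neg[OF assms(2), of "b - a"] False by simp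
  moreover have "t * (b - a) \<le> 0"
    using assms False by (simp add: mult_nonneg_nonpos)
  ultimately show ?thesis
    using False by linarith
qed

lemma scheme_value_between:
  fixes a b x C \<mu> Psiprev :: real
  assumes "0 \<le> C" "0 \<le> \<mu>" "\<mu> \<le> 2 * C + Psiprev" "Psiprev \<le> 2"
    and scheme: "x + 1/2 * (\<mu> * (b - a)) + C * (x - b) = a + 1/2 * Psiprev * (b - a)"
  shows "min a b \<le> x \<and> x \<le> max a b"
proof -
  define t where "t = (C + (Psiprev - \<mu>) / 2) / (1 + C)"
  have "(1 + C) * (x - a) = (C + (Psiprev - \<mu>) / 2) * (b - a)"
    using scheme by (simp add: field_simps)
  then have "x = a + t * (b - a)"
    using \<open>0 \<le> C\<close> by (simp add: t_def field_simps)
  moreover have "0 \<le> t" "t \<le> 1"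
    using assms by (simp_all add: t_def field_simps)
  ultimately show ?thesis
    using between_of_affine_coeff by presburger
qed

lemma strict_mono_between_iff:
  fixes f :: "'a::linorder \<Rightarrow> 'b::linorder"
  assumes "strict_mono f"
  shows "(min (f a) (f b) \<le> f x \<and> f x \<le> max (f a) (f b))
    \<longleftrightarrow> (min a b \<le> x \<and> x \<le> max a b)"
  using assms by (auto simp: strict_mono_less_eq min_def max_def)

theorem mainTheorem6:
  fixes \<theta> :: "real \<Rightarrow> real"
    and tau h v lam w Psiprev Ct :: real
    and Qi_n Qi_prev Qim_n Qim_next :: real
  assumes C1: "\<theta> C1_differentiable_on UNIV"
    and mono: "strict_mono \<theta>"
    and tau: "tau > 0" and h: "h > 0" and v: "v > 0"
    and lam: "lam = tau * v / h"
    and w: "0 \<le> w" "w \<le> 1"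
    and Psiprev: "0 \<le> Psiprev" "Psiprev \<le> 2"
    and Ct: "Ct > 0"
    and scheme: "\<theta> Qi_n
        + 1/2 * (if \<theta> Qim_next = \<theta> Qi_n then 0
                 else limiter Ct Psiprev w
                        ((\<theta> Qim_n - \<theta> Qi_prev) / (\<theta> Qim_next - \<theta> Qi_n))
                      * (\<theta> Qim_next - \<theta> Qi_n))
        + lam * Qi_n
      = \<theta> Qi_prev + 1/2 * Psiprev * (\<theta> Qim_n - \<theta> Qi_prev) + lam * Qim_n"
    and CFL: "ereal Ct \<le> courant \<theta> lam Qi_n Qim_n"
  shows "min Qi_prev Qim_n \<le> Qi_n \<and> Qi_n \<le> max Qi_prev Qim_n"
proof (cases "Qi_n = Qim_n")
  case True
  then show ?thesis by simp
next
  case False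
  define C where "C = (Qi_n - Qim_n) / (\<theta> Qi_n - \<theta> Qim_n) * lam"
  have "\<theta> Qi_n \<noteq> \<theta> Qim_n"
    using False mono strict_mono_eq by metis
  then have flux: "lam * (Qi_n - Qim_n) = C * (\<theta> Qi_n - \<theta> Qim_n)"
    by (simp add: C_def)
  have "Ct \<le> C"
    using CFL False by (simp add: courant_def C_def)
  obtain \<mu> where \<mu>: "0 \<le> \<mu>" "\<mu> \<le> 2 * Ct + Psiprev"
    and increment: "(if \<theta> Qim_next = \<theta> Qi_n then 0
        else limiter Ct Psiprev w ((\<theta> Qim_n - \<theta> Qi_prev) / (\<theta> Qim_next - \<theta> Qi_n))
          * (\<theta> Qim_next - \<theta> Qi_n)) = \<mu> * (\<theta> Qim_n - \<theta> Qi_prev)"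
    using limited_increment_eq_mult[of Ct Psiprev "\<theta> Qim_next - \<theta> Qi_n"] Ct Psiprev
    by auto
  have "\<theta> Qi_n + 1/2 * (\<mu> * (\<theta> Qim_n - \<theta> Qi_prev)) + C * (\<theta> Qi_n - \<theta> Qim_n)
      = \<theta> Qi_prev + 1/2 * Psiprev * (\<theta> Qim_n - \<theta> Qi_prev)"
    using scheme flux by (simp only: increment) (simp add: algebra_simps)
  moreover have "0 \<le> C" "\<mu> \<le> 2 * C + Psiprev"
    using \<open>Ct \<le> C\<close> Ct \<mu> by linarith+
  ultimately have "min (\<theta> Qi_prev) (\<theta> Qim_n) \<le> \<theta> Qi_n \<and> \<theta> Qi_n \<le> max (\<theta> Qi_prev) (\<theta> Qim_n)"
    using scheme_value_between \<mu>(1) Psiprev(2) by blast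
  then show ?thesis
    using strict_mono_between_iff[OF mono] by blast
qed

end
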